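(* Let $K$ be a field of characteristic different from $2$. For a $K$-vector space $V$, let $w_K(V)$ be the set $V$ with constant $0$ and ternary operations $\bar p_1(x,y,z)=x+\frac{z-y}{2}$, $\bar p_2(x,y,z)=\frac{x+z}{2}$, $\bar p_3(x,y,z)=\frac{x-y}{2}+z$. Then $w_K(V)$ is an algebra of $\mathrm{Hex}_3$, the addition $+:V\times V\to V$ is a $\mathrm{Hex}_3$-homomorphism making $w_K(V)$ an internal abelian group in $\mathrm{Hex}_3$, and $V\mapsto w_K(V)$ (identity on underlying maps) defines a faithful functor $w_K:K\text{-}\mathrm{Vect}\to\mathrm{Ab}(\mathrm{Hex}_3)$. Moreover, for $V\neq 0$, the objects $w_K(V)$ and $h(V,+)$ of $\mathrm{Ab}(\mathrm{Hex}_3)$ are not isomorphic.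
   Context: $\mathrm{Hex}_3$ is the pointed variety with one constant $0$ and three ternary operations $p_1,p_2,p_3$ subject exactly to $p_1(a,0,0)=a$, $p_2(a,0,a)=a$, $p_3(0,0,a)=a$, $p_1(a,a,b)=p_2(a,a,b)$, $p_2(a,b,b)=p_3(a,b,b)$, $p_i(b,b,b)=b$ ($i=1,2,3$). $\mathrm{Ab}(\mathrm{Hex}_3)$ is the category of internal abelian groups in $\mathrm{Hex}_3$. For an abelian group $(G,+)$, $h(G)$ denotes the $\mathrm{Hex}_3$-algebra on $G$ with constant $0$, $p_1(x,y,z)=x-y+z$, $p_2(x,y,z)=p_3(x,y,z)=z$, with internal abelian group structure given by $+$. *)

theory Defs
  imports Complex_Main
begin

record 'a hex3 =
  hzero :: 'a
  hp1 :: "'a \<Rightarrow> 'a \<Rightarrow> 'a \<Rightarrow> 'a"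
  hp2 :: "'a \<Rightarrow> 'a \<Rightarrow> 'a \<Rightarrow> 'a"
  hp3 :: "'a \<Rightarrow> 'a \<Rightarrow> 'a \<Rightarrow> 'a"

definition hex3_alg :: "('a, 'm) hex3_scheme \<Rightarrow> bool" where
  "hex3_alg A \<longleftrightarrow>
     (\<forall>a. hp1 A a (hzero A) (hzero A) = a) \<and>
     (\<forall>a. hp2 A a (hzero A) a = a) \<and>
     (\<forall>a. hp3 A (hzero A) (hzero A) a = a) \<and>
     (\<forall>a b. hp1 A a a b = hp2 A a a b) \<and>
     (\<forall>a b. hp2 A a b b = hp3 A a b b) \<and>
     (\<forall>b. hp1 A b b b = b) \<and> (\<forall>b. hp2 A b b b = b) \<and> (\<forall>b. hp3 A b b b = b)"

definition hex3_hom :: "('a, 'm) hex3_scheme \<Rightarrow> ('b, 'n) hex3_scheme \<Rightarrow> ('a \<Rightarrow> 'b) \<Rightarrow> bool" where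
  "hex3_hom A B f \<longleftrightarrow>
     f (hzero A) = hzero B \<and>
     (\<forall>x y z. f (hp1 A x y z) = hp1 B (f x) (f y) (f z)) \<and>
     (\<forall>x y z. f (hp2 A x y z) = hp2 B (f x) (f y) (f z)) \<and>
     (\<forall>x y z. f (hp3 A x y z) = hp3 B (f x) (f y) (f z))"

definition hex3_prod :: "('a, 'm) hex3_scheme \<Rightarrow> ('b, 'n) hex3_scheme \<Rightarrow> ('a \<times> 'b) hex3" where
  "hex3_prod A B =
     \<lparr> hzero = (hzero A, hzero B),
       hp1 = (\<lambda>x y z. (hp1 A (fst x) (fst y) (fst z), hp1 B (snd x) (snd y) (snd z))),
       hp2 = (\<lambda>x y z. (hp2 A (fst x) (fst y) (fst z), hp2 B (snd x) (snd y) (snd z))),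
       hp3 = (\<lambda>x y z. (hp3 A (fst x) (fst y) (fst z), hp3 B (snd x) (snd y) (snd z))) \<rparr>"

text \<open>Internal abelian group in Hex_3: a Hex_3-algebra A with addition, negation
  (homomorphisms A x A -> A and A -> A) and unit the constant of A (the unit map from
  the terminal algebra is a homomorphism iff it picks the constant), satisfying the
  abelian group axioms.\<close>
definition hex3_abgrp :: "('a, 'm) hex3_scheme \<Rightarrow> ('a \<Rightarrow> 'a \<Rightarrow> 'a) \<Rightarrow> ('a \<Rightarrow> 'a) \<Rightarrow> bool" where
  "hex3_abgrp A add neg \<longleftrightarrow>
     hex3_alg A \<and>
     hex3_hom (hex3_prod A A) A (\<lambda>(x, y). add x y) \<and>
     hex3_hom A A neg \<and>
     (\<forall>x y z. add (add x y) z = add x (add y z)) \<and>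
     (\<forall>x y. add x y = add y x) \<and>
     (\<forall>x. add (hzero A) x = x) \<and>
     (\<forall>x. add (neg x) x = hzero A)"

definition abhex3_mor :: "('a, 'm) hex3_scheme \<Rightarrow> ('a \<Rightarrow> 'a \<Rightarrow> 'a) \<Rightarrow>
    ('b, 'n) hex3_scheme \<Rightarrow> ('b \<Rightarrow> 'b \<Rightarrow> 'b) \<Rightarrow> ('a \<Rightarrow> 'b) \<Rightarrow> bool" where
  "abhex3_mor A addA B addB f \<longleftrightarrow>
     hex3_hom A B f \<and> (\<forall>x y. f (addA x y) = addB (f x) (f y))"

definition abhex3_iso :: "('a, 'm) hex3_scheme \<Rightarrow> ('a \<Rightarrow> 'a \<Rightarrow> 'a) \<Rightarrow>
    ('b, 'n) hex3_scheme \<Rightarrow> ('b \<Rightarrow> 'b \<Rightarrow> 'b) \<Rightarrow> bool" where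
  "abhex3_iso A addA B addB \<longleftrightarrow>
     (\<exists>f g. abhex3_mor A addA B addB f \<and> abhex3_mor B addB A addA g \<and>
            (\<forall>x. g (f x) = x) \<and> (\<forall>y. f (g y) = y))"

definition wK :: "('k::field \<Rightarrow> 'v::ab_group_add \<Rightarrow> 'v) \<Rightarrow> 'v hex3" where
  "wK sc = \<lparr> hzero = 0,
     hp1 = (\<lambda>x y z. x + sc (inverse 2) (z - y)),
     hp2 = (\<lambda>x y z. sc (inverse 2) (x + z)),
     hp3 = (\<lambda>x y z. sc (inverse 2) (x - y) + z) \<rparr>"

definition hG :: "'g::ab_group_add hex3" where
  "hG = \<lparr> hzero = 0, hp1 = (\<lambda>x y z. x - y + z), hp2 = (\<lambda>x y z. z), hp3 = (\<lambda>x y z. z) \<rparr>"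

end

theory Submission
  imports Defs
begin

text \<open>Everything except the non-isomorphism is a routine computation with the module laws, where
  \<open>2 \<noteq> 0\<close> enters through \<open>x/2 + x/2 = x\<close>. For the non-isomorphism, \<open>p\<^sub>2\<close> of \<open>h(V)\<close>
  forgets its first argument, so any homomorphism \<open>f : w\<^sub>K(V) \<rightarrow> h(V)\<close> satisfies
  \<open>f (v/2) = f (p\<^sub>2 v 0 0) = f 0\<close>; injectivity of an isomorphism then forces \<open>v = 0\<close>.\<close>

lemma (in vector_space) scale_half_add_self:
  assumes "(2::'a) \<noteq> 0"
  shows "scale (inverse 2) x + scale (inverse 2) x = x"
proof -
  have "inverse (2::'a) + inverse 2 = 1"
    using assms by (simp flip: mult_2)
  then show ?thesis
    by (metis scale_left_distrib scale_one)
qed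

lemma hex3_alg_wK:
  fixes sc :: "'k::field \<Rightarrow> 'v::ab_group_add \<Rightarrow> 'v"
  assumes "(2::'k) \<noteq> 0" and "vector_space sc"
  shows "hex3_alg (wK sc)"
proof -
  interpret vector_space sc by fact
  define h where "h = inverse (2::'k)"
  have halves: "\<And>x. sc h x + sc h x = x"
    unfolding h_def using assms(1) by (rule scale_half_add_self)
  show ?thesis
    unfolding hex3_alg_def wK_def h_def[symmetric] hex3.select_convs
  proof (intro conjI allI)
    fix a b :: 'v
    show "a + sc h (b - a) = sc h (a + b)"
      by (subst (1) halves[of a, symmetric])
        (simp add: scale_right_distrib scale_right_diff_distrib algebra_simps)
    show "sc h (a + b) = sc h (a - b) + b"
      by (subst (3) halves[of b, symmetric])
        (simp add: scale_right_distrib scale_right_diff_distrib algebra_simps)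
  qed (simp_all add: scale_right_distrib halves)
qed

lemma hex3_hom_add_wK:
  fixes sc :: "'k::field \<Rightarrow> 'v::ab_group_add \<Rightarrow> 'v"
  assumes "module sc"
  shows "hex3_hom (hex3_prod (wK sc) (wK sc)) (wK sc) (\<lambda>(x, y). x + y)"
proof -
  interpret module sc by fact
  show ?thesis
    unfolding hex3_hom_def hex3_prod_def wK_def
    by (simp add: scale_right_distrib scale_right_diff_distrib algebra_simps)
qed

lemma hex3_hom_uminus_wK:
  fixes sc :: "'k::field \<Rightarrow> 'v::ab_group_add \<Rightarrow> 'v"
  assumes "module sc"
  shows "hex3_hom (wK sc) (wK sc) uminus"
proof -
  interpret module sc by fact
  show ?thesis
    unfolding hex3_hom_def wK_def
    by (simp add: scale_right_distrib scale_right_diff_distrib scale_minus_right algebra_simps)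
qed

lemma hex3_abgrp_wK:
  fixes sc :: "'k::field \<Rightarrow> 'v::ab_group_add \<Rightarrow> 'v"
  assumes "(2::'k) \<noteq> 0" and "vector_space sc"
  shows "hex3_abgrp (wK sc) (+) uminus"
proof -
  interpret vector_space sc by fact
  have "hzero (wK sc) = 0"
    by (simp add: wK_def)
  then show ?thesis
    unfolding hex3_abgrp_def
    using hex3_alg_wK[OF assms] hex3_hom_add_wK[OF module_axioms]
      hex3_hom_uminus_wK[OF module_axioms]
    by (simp add: algebra_simps)
qed

lemma abhex3_mor_wK_linear:
  fixes sV :: "'k::field \<Rightarrow> 'v::ab_group_add \<Rightarrow> 'v"
    and sW :: "'k \<Rightarrow> 'w::ab_group_add \<Rightarrow> 'w"
  assumes "Vector_Spaces.linear sV sW f"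
  shows "abhex3_mor (wK sV) (+) (wK sW) (+) f"
proof -
  interpret Vector_Spaces.linear sV sW f by fact
  show ?thesis
    unfolding abhex3_mor_def hex3_hom_def wK_def
    by (simp add: add diff scale zero)
qed

lemma inj_hex3_hom_wK_hG_imp_trivial:
  fixes sc :: "'k::field \<Rightarrow> 'v::ab_group_add \<Rightarrow> 'v"
  assumes "(2::'k) \<noteq> 0" and "vector_space sc"
    and hom: "hex3_hom (wK sc) (hG :: 'g::ab_group_add hex3) f" and "inj f"
  shows "(v::'v) = 0"
proof -
  interpret vector_space sc by fact
  have "f (hp2 (wK sc) v 0 0) = hp2 hG (f v) (f 0) (f 0)"
    using hom unfolding hex3_hom_def by blast
  then have "f (sc (inverse 2) v) = f 0"
    by (simp add: hG_def wK_def)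
  then have "sc (inverse 2) v = 0"
    using \<open>inj f\<close> by (simp add: inj_eq)
  then show "v = 0"
    using assms(1) by simp
qed

lemma not_abhex3_iso_wK_hG:
  fixes sc :: "'k::field \<Rightarrow> 'v::ab_group_add \<Rightarrow> 'v"
  assumes "(2::'k) \<noteq> 0" and "vector_space sc" and "(v::'v) \<noteq> 0"
  shows "\<not> abhex3_iso (wK sc) (+) (hG :: 'v hex3) (+)"
proof
  assume "abhex3_iso (wK sc) (+) (hG :: 'v hex3) (+)"
  then obtain f g where "hex3_hom (wK sc) (hG :: 'v hex3) f" and "\<forall>x. g (f x) = x"
    unfolding abhex3_iso_def abhex3_mor_def by blast
  then have "v = 0"
    by (intro inj_hex3_hom_wK_hG_imp_trivial[OF assms(1,2)]) (auto intro: inj_on_inverseI)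
  with \<open>v \<noteq> 0\<close> show False ..
qed

theorem mainTheorem18:
  fixes sV :: "'k::field \<Rightarrow> 'v::ab_group_add \<Rightarrow> 'v"
    and sW :: "'k \<Rightarrow> 'w::ab_group_add \<Rightarrow> 'w"
  assumes char: "(2::'k) \<noteq> 0"
    and V: "vector_space sV" and W: "vector_space sW"
  shows "hex3_alg (wK sV)
    \<and> hex3_hom (hex3_prod (wK sV) (wK sV)) (wK sV) (\<lambda>(x, y). x + y)
    \<and> hex3_abgrp (wK sV) (+) uminus
    \<and> (\<forall>f. Vector_Spaces.linear sV sW f \<longrightarrow> abhex3_mor (wK sV) (+) (wK sW) (+) f)
    \<and> (\<forall>f g. Vector_Spaces.linear sV sW f \<longrightarrow> Vector_Spaces.linear sV sW g \<longrightarrow>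
          (\<forall>x. f x = g x) \<longrightarrow> f = g)
    \<and> ((\<exists>v::'v. v \<noteq> 0) \<longrightarrow> \<not> abhex3_iso (wK sV) (+) (hG :: 'v hex3) (+))"
proof -
  interpret vector_space sV by (rule V)
  show ?thesis
    using hex3_alg_wK[OF char V] hex3_hom_add_wK[OF module_axioms]
      hex3_abgrp_wK[OF char V] abhex3_mor_wK_linear not_abhex3_iso_wK_hG[OF char V]
    by blast
qed

end
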